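(* If $a,b>0$ satisfy $ab=\frac56$ and $b\in[\frac73,\frac83]$, then the Gabor system $\mathcal{G}(B_2,a,b)=\{e^{2\pi i bm\cdot}B_2(\cdot-ak)\}_{k,m\in\mathbb{Z}}$ is not a frame for $L^2(\mathbb{R})$.
   Context: $B_2=\chi_{[-1/2,1/2]}*\chi_{[-1/2,1/2]}$, i.e. $B_2(x)=\max(1-|x|,0)$. *)

theory Defs
  imports "HOL-Analysis.Analysis"
begin

text \<open>The B-spline of order 2 (hat function):
  B_2 = chi_[-1/2,1/2] * chi_[-1/2,1/2], i.e. B_2(x) = max(1-|x|, 0).\<close>
definition B2 :: "real \<Rightarrow> real" where
  "B2 x = max (1 - \<bar>x\<bar>) 0"

definition L2 :: "(real \<Rightarrow> complex) set" where
  "L2 = {f. f \<in> borel_measurable lborel \<and> integrable lborel (\<lambda>x. (cmod (f x))\<^sup>2)}"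

definition L2_inner :: "(real \<Rightarrow> complex) \<Rightarrow> (real \<Rightarrow> complex) \<Rightarrow> complex" where
  "L2_inner f g = (LINT x|lborel. f x * cnj (g x))"

definition L2_norm_sq :: "(real \<Rightarrow> complex) \<Rightarrow> real" where
  "L2_norm_sq f = (LINT x|lborel. (cmod (f x))\<^sup>2)"

definition gabor_atom :: "(real \<Rightarrow> complex) \<Rightarrow> real \<Rightarrow> real \<Rightarrow> int \<Rightarrow> int \<Rightarrow> real \<Rightarrow> complex" where
  "gabor_atom g a b k m x = exp (2 * of_real pi * \<i> * of_real (b * of_int m * x)) * g (x - a * of_int k)"

definition is_frame :: "('j \<Rightarrow> real \<Rightarrow> complex) \<Rightarrow> bool" where
  "is_frame e \<longleftrightarrow> (\<exists>A B. 0 < A \<and> A \<le> B \<and>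
     (\<forall>f\<in>L2. (\<lambda>j. (cmod (L2_inner f (e j)))\<^sup>2) summable_on UNIV \<and>
        A * L2_norm_sq f \<le> (\<Sum>\<^sub>\<infinity>j. (cmod (L2_inner f (e j)))\<^sup>2) \<and>
        (\<Sum>\<^sub>\<infinity>j. (cmod (L2_inner f (e j)))\<^sup>2) \<le> B * L2_norm_sq f))"

definition gabor_frame :: "(real \<Rightarrow> complex) \<Rightarrow> real \<Rightarrow> real \<Rightarrow> bool" where
  "gabor_frame g a b = is_frame (\<lambda>(k::int, m::int). gabor_atom g a b k m)"

end

theory Submission
  imports Defs
begin

text \<open>Suppose the system were a frame with bounds \<open>0 < A \<le> B\<close> and put \<open>d = a / 5\<close>, so that
  \<open>b d = 1/6\<close> and \<open>1/16 \<le> d \<le> 1/14\<close>.  Test the lower frame bound on the step function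
  \<open>f = \<Sum>j<5L. v j \<cdot> \<chi>[j d, j d + \<delta> d]\<close> with the 5-periodic weights \<open>v = (0, -3, 5, -5, 3)\<close>,
  whose squared norm is \<open>68 L \<delta> d\<close>.  On each box the window \<open>B2 (x - a k) = B2 (x - 5 k d)\<close> differs by
  at most \<open>\<delta> d\<close> from its value at the left end point.  With the window frozen there, the Gabor
  coefficient becomes a multiple of \<open>\<Sum>q. v q \<cdot> B2 (q d) \<cdot> exp (2 \<pi> i m q / 6)\<close>, which vanishes for
  every \<open>m\<close>; only the freezing error, of squared norm at most \<open>(\<delta> d)\<^sup>3\<close> per box, survives.
  Since the upper frame bound controls exponential sums of functions supported on short intervals,
  the translates \<open>k\<close> away from the two ends of the support of \<open>f\<close> contribute \<open>O(L (\<delta> d)\<^sup>3)\<close> and the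
  \<open>O(1)\<close> remaining ones \<open>O(\<delta> d)\<close>, which contradicts the lower bound \<open>68 A L \<delta> d\<close> once \<open>\<delta>\<close> is small
  and \<open>L\<close> large.\<close>

lemma B2_measurable [measurable]: "B2 \<in> borel_measurable borel"
  unfolding B2_def by measurable

lemma B2_nonneg: "0 \<le> B2 x"
  by (simp add: B2_def)

lemma B2_le_1: "B2 x \<le> 1"
  by (simp add: B2_def)

lemma B2_lipschitz: "\<bar>B2 x - B2 y\<bar> \<le> \<bar>x - y\<bar>"
  by (simp add: B2_def)

lemma B2_ge_half: "\<bar>x\<bar> \<le> 1/2 \<Longrightarrow> 1/2 \<le> B2 x"
  by (simp add: B2_def)

lemma B2_eq_0: "1 \<le> \<bar>x\<bar> \<Longrightarrow> B2 x = 0"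
  by (simp add: B2_def)

lemma B2_eq_linear: "\<bar>x\<bar> \<le> 1 \<Longrightarrow> B2 x = 1 - \<bar>x\<bar>"
  by (simp add: B2_def)

abbreviation B2c :: "real \<Rightarrow> complex" where
  "B2c \<equiv> \<lambda>x. complex_of_real (B2 x)"

definition wave :: "real \<Rightarrow> int \<Rightarrow> real \<Rightarrow> complex" where
  "wave b m x = exp (2 * of_real pi * \<i> * of_real (b * of_int m * x))"

lemma wave_measurable [measurable]: "wave b m \<in> borel_measurable borel"
  unfolding wave_def by measurable

lemma norm_wave [simp]: "cmod (wave b m x) = 1"
  unfolding wave_def by (simp add: norm_exp_eq_Re)

lemma cnj_wave: "cnj (wave b m x) = wave b (- m) x"
  unfolding wave_def by (simp add: exp_cnj)

lemma cnj_wave_measurable [measurable]: "(\<lambda>x. cnj (wave b m x)) \<in> borel_measurable borel"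
  unfolding cnj_wave by measurable

lemma wave_add: "wave b m (x + y) = wave b m x * wave b m y"
  unfolding wave_def by (simp add: distrib_left distrib_right exp_add)

lemma gabor_atom_eq_wave: "gabor_atom g a b k m x = wave b m x * g (x - a * of_int k)"
  by (simp add: gabor_atom_def wave_def)

section \<open>Bessel bounds and exponential sums\<close>

definition gabor_bessel :: "(real \<Rightarrow> complex) \<Rightarrow> real \<Rightarrow> real \<Rightarrow> real \<Rightarrow> bool" where
  "gabor_bessel g a b B \<longleftrightarrow> (\<forall>f\<in>L2.
     (\<lambda>(k::int, m::int). (cmod (L2_inner f (gabor_atom g a b k m)))\<^sup>2) summable_on UNIV \<and>
     (\<Sum>\<^sub>\<infinity>(k, m). (cmod (L2_inner f (gabor_atom g a b k m)))\<^sup>2) \<le> B * L2_norm_sq f)"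

lemma gabor_bessel_finite_sum:
  assumes "gabor_bessel g a b B" "f \<in> L2" "finite S"
  shows "(\<Sum>(k, m)\<in>S. (cmod (L2_inner f (gabor_atom g a b k m)))\<^sup>2) \<le> B * L2_norm_sq f"
proof -
  let ?c = "\<lambda>(k::int, m::int). (cmod (L2_inner f (gabor_atom g a b k m)))\<^sup>2"
  have "sum ?c S \<le> (\<Sum>\<^sub>\<infinity>j. ?c j)"
    using assms by (intro finite_sum_le_infsum) (auto simp: gabor_bessel_def)
  also have "\<dots> \<le> B * L2_norm_sq f"
    using assms by (auto simp: gabor_bessel_def)
  finally show ?thesis .
qed

lemma gabor_infsum_le_finite_sums:
  assumes "gabor_bessel g a b B" "f \<in> L2"
    and "\<And>S. finite S \<Longrightarrow> (\<Sum>(k, m)\<in>S. (cmod (L2_inner f (gabor_atom g a b k m)))\<^sup>2) \<le> c"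
  shows "(\<Sum>\<^sub>\<infinity>(k, m). (cmod (L2_inner f (gabor_atom g a b k m)))\<^sup>2) \<le> c"
  using assms by (intro infsum_le_finite_sums) (auto simp: gabor_bessel_def)

lemma gabor_frame_bounds:
  assumes "gabor_frame g a b"
  obtains A B where "0 < A" "0 \<le> B" "gabor_bessel g a b B"
    "\<And>f. f \<in> L2 \<Longrightarrow> A * L2_norm_sq f \<le> (\<Sum>\<^sub>\<infinity>(k, m). (cmod (L2_inner f (gabor_atom g a b k m)))\<^sup>2)"
proof -
  obtain A B where "0 < A" "A \<le> B"
    "\<forall>f\<in>L2. (\<lambda>(k::int, m::int). (cmod (L2_inner f (gabor_atom g a b k m)))\<^sup>2) summable_on UNIV \<and>
       A * L2_norm_sq f \<le> (\<Sum>\<^sub>\<infinity>(k, m). (cmod (L2_inner f (gabor_atom g a b k m)))\<^sup>2) \<and>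
       (\<Sum>\<^sub>\<infinity>(k, m). (cmod (L2_inner f (gabor_atom g a b k m)))\<^sup>2) \<le> B * L2_norm_sq f"
    using assms unfolding gabor_frame_def is_frame_def by (simp add: case_prod_unfold) blast
  then show ?thesis
    by (intro that[of A B]) (auto simp: gabor_bessel_def)
qed

lemma integrable_bounded_by_interval:
  fixes r :: "real \<Rightarrow> complex"
  assumes "r \<in> borel_measurable lborel" "\<And>x. cmod (r x) \<le> K * indicator {lo..hi} x"
  shows "integrable lborel r"
proof (rule Bochner_Integration.integrable_bound[where f = "\<lambda>x. K * indicator {lo..hi} x"])
  show "integrable lborel (\<lambda>x. K * indicator {lo..hi} x :: real)"
    by (intro integrable_mult_right integrable_real_indicator) (auto simp: emeasure_lborel_Icc_eq)
  show "AE x in lborel. norm (r x) \<le> norm (K * indicator {lo..hi} x :: real)"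
    using assms(2) by (auto intro!: AE_I2 order_trans[OF _ abs_ge_self])
qed (use assms in auto)

lemma integrable_sq_bounded_by_interval:
  fixes r :: "real \<Rightarrow> complex"
  assumes "r \<in> borel_measurable lborel" "\<And>x. cmod (r x) \<le> K * indicator {lo..hi} x"
  shows "integrable lborel (\<lambda>x. (cmod (r x))\<^sup>2)"
proof (rule Bochner_Integration.integrable_bound[where f = "\<lambda>x. K\<^sup>2 * indicator {lo..hi} x"])
  show "integrable lborel (\<lambda>x. K\<^sup>2 * indicator {lo..hi} x :: real)"
    by (intro integrable_mult_right integrable_real_indicator) (auto simp: emeasure_lborel_Icc_eq)
  have "(cmod (r x))\<^sup>2 \<le> K\<^sup>2 * indicator {lo..hi} x" for x
  proof -
    have "(cmod (r x))\<^sup>2 \<le> (K * indicator {lo..hi} x)\<^sup>2"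
      using assms(2)[of x] by (intro power_mono) auto
    also have "\<dots> = K\<^sup>2 * indicator {lo..hi} x"
      by (simp add: indicator_def)
    finally show ?thesis .
  qed
  then show "AE x in lborel. norm ((cmod (r x))\<^sup>2) \<le> norm (K\<^sup>2 * indicator {lo..hi} x :: real)"
    by (auto intro!: AE_I2)
qed (use assms in auto)

lemma integrable_mult_cnj_wave:
  fixes r :: "real \<Rightarrow> complex"
  assumes "r \<in> borel_measurable lborel" "\<And>x. cmod (r x) \<le> K * indicator {lo..hi} x"
  shows "integrable lborel (\<lambda>x. r x * cnj (wave b m x))"
  using assms by (intro integrable_bounded_by_interval[where K = K]) (auto simp: norm_mult)

lemma L2_inner_sum:
  assumes "finite T" "\<And>j. j \<in> T \<Longrightarrow> integrable lborel (\<lambda>x. r j x * cnj (e x))"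
  shows "L2_inner (\<lambda>x. \<Sum>j\<in>T. r j x) e = (\<Sum>j\<in>T. L2_inner (r j) e)"
  unfolding L2_inner_def sum_distrib_right using assms by (simp add: Bochner_Integration.integral_sum)

lemma L2_inner_add:
  assumes "integrable lborel (\<lambda>x. f x * cnj (e x))" "integrable lborel (\<lambda>x. g x * cnj (e x))"
  shows "L2_inner (\<lambda>x. f x + g x) e = L2_inner f e + L2_inner g e"
  unfolding L2_inner_def using assms by (simp add: distrib_right)

lemma L2_inner_scaleC: "L2_inner (\<lambda>x. c * f x) e = c * L2_inner f e"
  unfolding L2_inner_def by (simp add: mult.assoc)

lemma L2_inner_translate_wave:
  "L2_inner (\<lambda>x. f (x - c)) (wave b m) = cnj (wave b m c) * L2_inner f (wave b m)"
proof -
  have "L2_inner (\<lambda>x. f (x - c)) (wave b m) = (LINT x|lborel. f (c + x - c) * cnj (wave b m (c + x)))"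
    unfolding L2_inner_def
    using lborel_integral_real_affine[of 1 "\<lambda>x. f (x - c) * cnj (wave b m x)" c] by simp
  also have "\<dots> = (LINT x|lborel. cnj (wave b m c) * (f x * cnj (wave b m x)))"
    by (simp add: wave_add mult_ac)
  finally show ?thesis
    unfolding L2_inner_def by simp
qed

lemma norm_sum_mult_sq_le:
  fixes u c :: "'a \<Rightarrow> complex"
  assumes "\<And>j. j \<in> T \<Longrightarrow> cmod (c j) \<le> C"
  shows "(cmod (\<Sum>j\<in>T. c j * u j))\<^sup>2 \<le> C\<^sup>2 * card T * (\<Sum>j\<in>T. (cmod (u j))\<^sup>2)"
proof -
  have "cmod (\<Sum>j\<in>T. c j * u j) \<le> (\<Sum>j\<in>T. cmod (c j) * cmod (u j))"
    by (rule order_trans[OF norm_sum]) (simp add: norm_mult)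
  then have "(cmod (\<Sum>j\<in>T. c j * u j))\<^sup>2 \<le> (\<Sum>j\<in>T. cmod (c j) * cmod (u j))\<^sup>2"
    by (intro power_mono) auto
  also have "\<dots> \<le> (\<Sum>j\<in>T. (cmod (c j) * cmod (u j))\<^sup>2) * card T"
    by (rule sum_squared_le_sum_of_squares)
  also have "\<dots> \<le> (\<Sum>j\<in>T. C\<^sup>2 * (cmod (u j))\<^sup>2) * card T"
    unfolding power_mult_distrib
    using assms by (intro mult_right_mono sum_mono power_mono) auto
  finally show ?thesis
    by (simp add: sum_distrib_left mult_ac)
qed

lemma bessel_wave_short_support:
  assumes bessel: "gabor_bessel B2c a b B" and B: "0 \<le> B" and a: "0 < a" "a \<le> 1/2"
    and r: "r \<in> borel_measurable lborel" "\<And>x. cmod (r x) \<le> K * indicator {lo..lo + 1/2} x"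
    and M: "finite M"
  shows "(\<Sum>m\<in>M. (cmod (L2_inner r (wave b m)))\<^sup>2) \<le> 4 * B * (LINT x|lborel. (cmod (r x))\<^sup>2)"
proof -
  \<comment> \<open>The window of the first translate starting at or after \<open>lo\<close> is \<open>\<ge> 1/2\<close> on the support of \<open>r\<close>,
    so \<open>r\<close> is that window times a function \<open>h\<close> with \<open>|h| \<le> 2|r|\<close>.\<close>
  define k where "k = \<lceil>lo / a\<rceil>"
  have "lo / a \<le> of_int k" "of_int k < lo / a + 1"
    unfolding k_def by linarith+
  then have k: "lo \<le> a * k" "a * k < lo + a"
    using a by (auto simp: field_simps)
  have window: "1/2 \<le> B2 (x - a * k)" if "x \<in> {lo..lo + 1/2}" for x
    using that k a by (intro B2_ge_half abs_leI) auto
  define h where "h x = r x / B2c (x - a * k)" for x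
  have h_meas: "h \<in> borel_measurable lborel"
    unfolding h_def using r(1) by measurable
  have h_le: "cmod (h x) \<le> 2 * cmod (r x)" for x
  proof (cases "x \<in> {lo..lo + 1/2}")
    case True
    have "1 * cmod (r x) \<le> (2 * B2 (x - a * k)) * cmod (r x)"
      using window[OF True] by (intro mult_right_mono) auto
    with window[OF True] show ?thesis
      by (simp add: h_def norm_divide divide_le_eq mult_ac)
  next
    case False
    then show ?thesis using r(2)[of x] by (simp add: h_def)
  qed
  have h_sq_le: "(cmod (h x))\<^sup>2 \<le> 4 * (cmod (r x))\<^sup>2" for x
    using power_mono[OF h_le[of x], of 2] by (simp add: power_mult_distrib)
  have r_int: "integrable lborel (\<lambda>x. (cmod (r x))\<^sup>2)"
    by (rule integrable_sq_bounded_by_interval[OF r])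
  have h_int: "integrable lborel (\<lambda>x. (cmod (h x))\<^sup>2)"
    by (rule Bochner_Integration.integrable_bound[OF integrable_mult_right[OF r_int, of 4]])
       (use h_meas h_sq_le in auto)
  have h_L2: "h \<in> L2"
    unfolding L2_def using h_meas h_int by auto
  have h_norm: "L2_norm_sq h \<le> 4 * (LINT x|lborel. (cmod (r x))\<^sup>2)"
    unfolding L2_norm_sq_def integral_mult_right_zero[symmetric]
    by (rule integral_mono[OF h_int]) (use r_int h_sq_le in auto)
  have coeff: "L2_inner r (wave b m) = L2_inner h (gabor_atom B2c a b k m)" for m
    unfolding L2_inner_def
  proof (rule Bochner_Integration.integral_cong[OF refl])
    fix x
    show "r x * cnj (wave b m x) = h x * cnj (gabor_atom B2c a b k m x)"
    proof (cases "x \<in> {lo..lo + 1/2}")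
      case True
      with window[OF True] show ?thesis
        by (simp add: h_def gabor_atom_eq_wave)
    next
      case False
      then show ?thesis using r(2)[of x] by (simp add: h_def)
    qed
  qed
  have "(\<Sum>m\<in>M. (cmod (L2_inner r (wave b m)))\<^sup>2)
      = (\<Sum>(k', m)\<in>{k} \<times> M. (cmod (L2_inner h (gabor_atom B2c a b k' m)))\<^sup>2)"
    by (simp add: coeff sum.cartesian_product[symmetric])
  also have "\<dots> \<le> B * L2_norm_sq h"
    using M by (intro gabor_bessel_finite_sum[OF bessel h_L2]) auto
  also have "\<dots> \<le> 4 * B * (LINT x|lborel. (cmod (r x))\<^sup>2)"
    using mult_left_mono[OF h_norm B] by simp
  finally show ?thesis .
qed

lemma bessel_wave_combination:
  fixes c :: "'i \<Rightarrow> complex" and r :: "'i \<Rightarrow> real \<Rightarrow> complex"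
  assumes bessel: "gabor_bessel B2c a b B" and B: "0 \<le> B" and a: "0 < a" "a \<le> 1/2"
    and c: "\<And>j. j \<in> T \<Longrightarrow> cmod (c j) \<le> C"
    and r: "\<And>j. j \<in> T \<Longrightarrow> r j \<in> borel_measurable lborel"
      "\<And>j x. j \<in> T \<Longrightarrow> cmod (r j x) \<le> K * indicator {lo j..lo j + 1/2} x"
      "\<And>j. j \<in> T \<Longrightarrow> (LINT x|lborel. (cmod (r j x))\<^sup>2) \<le> Q"
    and M: "finite M"
  shows "(\<Sum>m\<in>M. (cmod (\<Sum>j\<in>T. c j * L2_inner (r j) (wave b m)))\<^sup>2)
      \<le> C\<^sup>2 * (real (card T))\<^sup>2 * (4 * B * Q)"
proof -
  have "(\<Sum>m\<in>M. (cmod (\<Sum>j\<in>T. c j * L2_inner (r j) (wave b m)))\<^sup>2)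
      \<le> (\<Sum>m\<in>M. C\<^sup>2 * card T * (\<Sum>j\<in>T. (cmod (L2_inner (r j) (wave b m)))\<^sup>2))"
    using c by (intro sum_mono norm_sum_mult_sq_le)
  also have "\<dots> = C\<^sup>2 * card T * (\<Sum>j\<in>T. \<Sum>m\<in>M. (cmod (L2_inner (r j) (wave b m)))\<^sup>2)"
    by (simp add: sum_distrib_left sum.swap[of _ M T])
  also have "\<dots> \<le> C\<^sup>2 * card T * (\<Sum>j\<in>T. 4 * B * Q)"
  proof (intro mult_left_mono sum_mono)
    fix j assume j: "j \<in> T"
    have "(\<Sum>m\<in>M. (cmod (L2_inner (r j) (wave b m)))\<^sup>2) \<le> 4 * B * (LINT x|lborel. (cmod (r j x))\<^sup>2)"
      by (rule bessel_wave_short_support[OF bessel B a r(1)[OF j] r(2)[OF j] M])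
    also have "\<dots> \<le> 4 * B * Q"
      using r(3)[OF j] B by (intro mult_left_mono) auto
    finally show "(\<Sum>m\<in>M. (cmod (L2_inner (r j) (wave b m)))\<^sup>2) \<le> 4 * B * Q" .
  qed auto
  finally show ?thesis
    by (simp add: power2_eq_square mult_ac)
qed

section \<open>A vanishing trigonometric sum\<close>

definition weight :: "int \<Rightarrow> real" where
  "weight j = (if j mod 5 = 0 then 0 else if j mod 5 = 1 then -3 else if j mod 5 = 2 then 5
     else if j mod 5 = 3 then -5 else 3)"

lemma abs_weight_le: "\<bar>weight j\<bar> \<le> 5"
  by (simp add: weight_def)

lemma weight_periodic: "weight (j + 5 * k) = weight j"
  by (simp add: weight_def)

definition zeta6 :: "int \<Rightarrow> int \<Rightarrow> complex" where
  "zeta6 m q = exp (2 * of_real pi * \<i> * of_int (m * q) / 6)"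

lemma zeta6_add: "zeta6 m (q + p) = zeta6 m q * zeta6 m p"
  unfolding zeta6_def by (simp add: distrib_left distrib_right add_divide_distrib exp_add)

lemma zeta6_mod: "zeta6 m (q mod 6) = zeta6 m q"
proof -
  have "exp (2 * of_real pi * \<i> * of_int (m * (6 * (q div 6))) / 6) = 1"
    using exp_integer_2pi[of "of_int (m * (q div 6))"] by (simp add: mult_ac)
  then have "zeta6 m (6 * (q div 6)) = 1"
    by (simp add: zeta6_def)
  then show ?thesis
    using zeta6_add[of m "q mod 6" "6 * (q div 6)"] by simp
qed

lemma wave_grid:
  assumes "b * d = 1/6"
  shows "wave b m (of_int j * d) = zeta6 m j"
proof -
  have "b * of_int m * (of_int j * d) = of_int (m * j) / 6"
    using assms by (simp add: field_simps)
  then have arg: "complex_of_real (b * of_int m * (of_int j * d)) = of_int (m * j) / 6"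
    by (metis of_real_divide of_real_numeral of_real_of_int_eq)
  show ?thesis
    unfolding wave_def zeta6_def arg by (simp add: times_divide_eq_right)
qed

lemma weighted_B2_sum_eq_0:
  assumes d: "1/16 \<le> d" "d \<le> 1/14"
  shows "(\<Sum>q\<in>{-16..16}. complex_of_real (weight q * B2 (of_int q * d)) * zeta6 m q) = 0"
proof -
  \<comment> \<open>On \<open>|q| \<le> 14\<close> the hat is linear, \<open>B2 (q d) = 1 - |q| d\<close>; in each residue class
    \<open>q mod 6\<close> both \<open>\<Sum> weight q\<close> and \<open>\<Sum> weight q * |q|\<close> vanish.  The terms \<open>q = \<plusminus>15\<close>
    have weight \<open>0\<close>, and \<open>q = \<plusminus>16\<close> lies outside the support of the hat as \<open>d \<ge> 1/16\<close>.\<close>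
  have termwise: "complex_of_real (weight q * B2 (of_int q * d)) * zeta6 m q
      = complex_of_real (weight q * (if \<bar>q\<bar> \<le> 14 then 1 - of_int \<bar>q\<bar> * d else 0)) * zeta6 m (q mod 6)"
    if q: "q \<in> {-16..16}" for q
  proof -
    have abs_qd: "\<bar>of_int q * d\<bar> = of_int \<bar>q\<bar> * d"
      using d by (simp add: abs_mult)
    have "weight q * B2 (of_int q * d) = weight q * (if \<bar>q\<bar> \<le> 14 then 1 - of_int \<bar>q\<bar> * d else 0)"
    proof (cases "\<bar>q\<bar> \<le> 14")
      case True
      have "\<bar>real_of_int q\<bar> * d \<le> 14 * (1/14)"
        using True d by (intro mult_mono) auto
      then show ?thesis
        using True abs_qd by (simp add: B2_eq_linear)
    next
      case False
      with q consider "q = 15 \<or> q = -15" | "\<bar>q\<bar> = 16"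
        by fastforce
      then show ?thesis
      proof cases
        case 2
        then have "B2 (of_int q * d) = 0"
          using abs_qd d by (intro B2_eq_0) simp
        then show ?thesis
          using False by simp
      qed (auto simp: weight_def)
    qed
    then show ?thesis
      by (simp only: zeta6_mod)
  qed
  have enum: "{-16..16::int} = {-16, -15, -14, -13, -12, -11, -10, -9, -8, -7, -6, -5, -4, -3, -2, -1,
      0, 1, 2, 3, 4, 5, 6, 7, 8, 9, 10, 11, 12, 13, 14, 15, 16}"
    by auto presburger
  have "(\<Sum>q\<in>{-16..16}. complex_of_real (weight q * B2 (of_int q * d)) * zeta6 m q)
      = (\<Sum>q\<in>{-16..16}. complex_of_real (weight q * (if \<bar>q\<bar> \<le> 14 then 1 - of_int \<bar>q\<bar> * d else 0))
          * zeta6 m (q mod 6))"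
    by (rule sum.cong[OF refl termwise])
  also have "\<dots> = 0"
    unfolding enum by (simp add: weight_def algebra_simps)
  finally show ?thesis .
qed

lemma weighted_B2_sum_shift_eq_0:
  assumes "1/16 \<le> d" "d \<le> 1/14"
  shows "(\<Sum>j\<in>{5 * k - 16..5 * k + 16}. complex_of_real (weight j * B2 (of_int (j - 5 * k) * d)) * zeta6 m j) = 0"
proof -
  have shift: "{5 * k - 16..5 * k + 16} = (\<lambda>q. q + 5 * k) ` {-16..16}"
    by simp
  have "(\<Sum>j\<in>{5 * k - 16..5 * k + 16}. complex_of_real (weight j * B2 (of_int (j - 5 * k) * d)) * zeta6 m j)
      = (\<Sum>q\<in>{-16..16}. complex_of_real (weight (q + 5 * k) * B2 (of_int q * d)) * zeta6 m (q + 5 * k))"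
    unfolding shift by (subst sum.reindex) (auto simp: inj_on_def)
  also have "\<dots> = zeta6 m (5 * k) * (\<Sum>q\<in>{-16..16}. complex_of_real (weight q * B2 (of_int q * d)) * zeta6 m q)"
    by (simp only: weight_periodic zeta6_add sum_distrib_left) (simp add: mult_ac)
  also have "\<dots> = 0"
    using weighted_B2_sum_eq_0[OF assms] by simp
  finally show ?thesis .
qed

definition grid_box :: "real \<Rightarrow> real \<Rightarrow> int \<Rightarrow> real \<Rightarrow> real" where
  "grid_box d \<delta> j = indicator {of_int j * d .. of_int j * d + \<delta> * d}"

definition test_fun :: "real \<Rightarrow> real \<Rightarrow> nat \<Rightarrow> real \<Rightarrow> complex" where
  "test_fun d \<delta> L x = (\<Sum>j\<in>{0..<5 * int L}. complex_of_real (weight j * grid_box d \<delta> j x))"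

lemma grid_box_measurable [measurable]: "grid_box d \<delta> j \<in> borel_measurable borel"
  unfolding grid_box_def by measurable

lemma grid_box_cases: "grid_box d \<delta> j x = 0 \<or> grid_box d \<delta> j x = 1"
  by (simp add: grid_box_def indicator_def)

lemma grid_box_nonneg: "0 \<le> grid_box d \<delta> j x"
  by (simp add: grid_box_def)

lemma grid_box_nonzero_iff:
  "grid_box d \<delta> j x \<noteq> 0 \<longleftrightarrow> of_int j * d \<le> x \<and> x \<le> of_int j * d + \<delta> * d"
  by (simp add: grid_box_def indicator_def)

lemma grid_box_translate: "grid_box d \<delta> j x = grid_box d \<delta> 0 (x - of_int j * d)"
  by (auto simp: grid_box_def indicator_def)

lemma grid_box_le_indicator:
  "\<delta> * d \<le> l \<Longrightarrow> grid_box d \<delta> j x \<le> indicator {of_int j * d .. of_int j * d + l} x"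
  by (auto simp: grid_box_def indicator_def)

lemma integrable_grid_box: "integrable lborel (grid_box d \<delta> j)"
  unfolding grid_box_def by (intro integrable_real_indicator) (auto simp: emeasure_lborel_Icc_eq)

lemma integral_grid_box: "0 \<le> \<delta> \<Longrightarrow> 0 \<le> d \<Longrightarrow> (LINT x|lborel. grid_box d \<delta> j x) = \<delta> * d"
  unfolding grid_box_def by simp

lemma grid_box_disjoint:
  assumes "0 < d" "\<delta> < 1" "grid_box d \<delta> j x \<noteq> 0" "grid_box d \<delta> j' x \<noteq> 0"
  shows "j = j'"
proof -
  have "\<delta> * d < 1 * d"
    using assms(1,2) by (intro mult_strict_right_mono) auto
  with assms(3,4) have "of_int j * d < (of_int j' + 1) * d" "of_int j' * d < (of_int j + 1) * d"
    by (auto simp: grid_box_nonzero_iff distrib_right)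
  then have "real_of_int j < of_int j' + 1" "real_of_int j' < of_int j + 1"
    using assms(1) by (auto simp: mult_less_cancel_right)
  then show ?thesis
    by linarith
qed

lemma test_fun_measurable [measurable]: "test_fun d \<delta> L \<in> borel_measurable borel"
  unfolding test_fun_def by measurable

lemma norm_test_fun_sq:
  assumes "0 < d" "\<delta> < 1"
  shows "(cmod (test_fun d \<delta> L x))\<^sup>2 = (\<Sum>j\<in>{0..<5 * int L}. (weight j)\<^sup>2 * grid_box d \<delta> j x)"
proof (cases "\<exists>j\<in>{0..<5 * int L}. grid_box d \<delta> j x \<noteq> 0")
  case True
  then obtain i where i: "i \<in> {0..<5 * int L}" "grid_box d \<delta> i x \<noteq> 0"
    by blast
  then have others: "grid_box d \<delta> j x = 0" if "j \<noteq> i" for j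
    using grid_box_disjoint[OF assms _ i(2), of j] that by auto
  have "grid_box d \<delta> i x = 1"
    using i(2) grid_box_cases by blast
  moreover have "test_fun d \<delta> L x = complex_of_real (weight i * grid_box d \<delta> i x)"
    unfolding test_fun_def using i others by (subst sum.mono_neutral_right[of _ "{i}"]) auto
  moreover have "(\<Sum>j\<in>{0..<5 * int L}. (weight j)\<^sup>2 * grid_box d \<delta> j x) = (weight i)\<^sup>2 * grid_box d \<delta> i x"
    using i others by (subst sum.mono_neutral_right[of _ "{i}"]) auto
  ultimately show ?thesis
    by simp
next
  case False
  then show ?thesis
    by (simp add: test_fun_def)
qed

lemma sum_weight_sq: "(\<Sum>j\<in>{0..<5 * int L}. (weight j)\<^sup>2) = 68 * real L"
proof (induction L)
  case (Suc L)
  let ?block = "(\<lambda>i. i + 5 * int L) ` {0..<5}"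
  have "{0..<5 * int (Suc L)} = {0..<5 * int L} \<union> ?block"
    by auto
  then have "(\<Sum>j\<in>{0..<5 * int (Suc L)}. (weight j)\<^sup>2)
      = (\<Sum>j\<in>{0..<5 * int L}. (weight j)\<^sup>2) + (\<Sum>j\<in>?block. (weight j)\<^sup>2)"
    by (simp add: sum.union_disjoint)
  also have "(\<Sum>j\<in>?block. (weight j)\<^sup>2) = (\<Sum>i\<in>{0..<5}. (weight i)\<^sup>2)"
    by (subst sum.reindex) (auto simp: inj_on_def weight_periodic)
  also have "{0..<5::int} = {0, 1, 2, 3, 4}"
    by auto
  finally show ?case
    using Suc.IH by (simp add: weight_def)
qed simp

lemma test_fun_L2:
  assumes "0 < d" "0 < \<delta>" "\<delta> < 1"
  shows "test_fun d \<delta> L \<in> L2" and "L2_norm_sq (test_fun d \<delta> L) = 68 * real L * (\<delta> * d)"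
proof -
  have "integrable lborel (\<lambda>x. \<Sum>j\<in>{0..<5 * int L}. (weight j)\<^sup>2 * grid_box d \<delta> j x)"
    by (intro Bochner_Integration.integrable_sum integrable_mult_right integrable_grid_box)
  then show "test_fun d \<delta> L \<in> L2"
    unfolding L2_def using norm_test_fun_sq[OF assms(1,3)] by simp
  have "L2_norm_sq (test_fun d \<delta> L) = (LINT x|lborel. (\<Sum>j\<in>{0..<5 * int L}. (weight j)\<^sup>2 * grid_box d \<delta> j x))"
    unfolding L2_norm_sq_def using norm_test_fun_sq[OF assms(1,3)] by simp
  also have "\<dots> = (\<Sum>j\<in>{0..<5 * int L}. (weight j)\<^sup>2 * (\<delta> * d))"
    using assms by (simp add: Bochner_Integration.integral_sum integrable_grid_box integral_grid_box)
  also have "\<dots> = 68 * real L * (\<delta> * d)"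
    by (simp add: sum_distrib_right[symmetric] sum_weight_sq)
  finally show "L2_norm_sq (test_fun d \<delta> L) = 68 * real L * (\<delta> * d)" .
qed

section \<open>Gabor coefficients of the test functions\<close>

context
  fixes a b d \<delta> B :: real and L :: nat
  assumes a_eq: "a = 5 * d" and bd: "b * d = 1/6" and d_ge: "1/16 \<le> d" and d_le: "d \<le> 1/14"
    and \<delta>_pos: "0 < \<delta>" and \<delta>_le: "\<delta> \<le> 1/2"
    and B: "0 \<le> B" and bessel: "gabor_bessel B2c a b B"
begin

lemma box_length_le_half: "\<delta> * d \<le> 1/2"
proof -
  have "\<delta> * d \<le> (1/2) * (1/14)"
    using \<delta>_pos \<delta>_le d_ge d_le by (intro mult_mono) auto
  then show ?thesis
    by simp
qed

lemma grid_box_le_half_interval: "grid_box d \<delta> j x \<le> indicator {of_int j * d .. of_int j * d + 1/2} x"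
  using box_length_le_half by (rule grid_box_le_indicator)

lemma B2_translate_eq_0_far:
  assumes "grid_box d \<delta> j x \<noteq> 0" "j \<notin> {5 * k - 16..5 * k + 16}"
  shows "B2 (x - a * of_int k) = 0"
proof -
  have x: "of_int j * d \<le> x" "x \<le> of_int j * d + d / 2"
    using assms(1) \<delta>_le d_ge by (auto simp: grid_box_nonzero_iff intro: order_trans mult_right_mono)
  from assms(2) consider "5 * k + 17 \<le> j" | "j \<le> 5 * k - 17"
    by fastforce
  then have "1 \<le> \<bar>x - a * of_int k\<bar>"
  proof cases
    case 1
    then have "(5 * of_int k + 17) * d \<le> of_int j * d"
      using d_ge by (intro mult_right_mono) linarith+
    then have "17 * d \<le> x - a * of_int k"
      using x a_eq by (simp add: algebra_simps)
    then show ?thesis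
      using d_ge by arith
  next
    case 2
    then have "of_int j * d \<le> (5 * of_int k - 17) * d"
      using d_ge by (intro mult_right_mono) linarith+
    then have "x - a * of_int k \<le> - 17 * d + d / 2"
      using x a_eq by (simp add: algebra_simps)
    then show ?thesis
      using d_ge by arith
  qed
  then show ?thesis
    by (rule B2_eq_0)
qed

definition near_indices :: "int \<Rightarrow> int set" where
  "near_indices k = {0..<5 * int L} \<inter> {5 * k - 16..5 * k + 16}"

lemma finite_near_indices [simp]: "finite (near_indices k)"
  by (simp add: near_indices_def)

lemma card_near_indices_le: "card (near_indices k) \<le> 33"
proof -
  have "card (near_indices k) \<le> card {5 * k - 16..5 * k + 16}"
    unfolding near_indices_def by (intro card_mono) auto
  then show ?thesis
    by simp
qed

definition windowed_box :: "int \<Rightarrow> int \<Rightarrow> real \<Rightarrow> complex" where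
  "windowed_box k j x = complex_of_real (grid_box d \<delta> j x * B2 (x - a * of_int k))"

lemma windowed_box_measurable [measurable]: "windowed_box k j \<in> borel_measurable borel"
  unfolding windowed_box_def by measurable

lemma norm_windowed_box_le: "cmod (windowed_box k j x) \<le> grid_box d \<delta> j x"
  unfolding windowed_box_def norm_of_real abs_mult
  using B2_le_1 B2_nonneg grid_box_nonneg by (simp add: mult_left_le)

lemma test_fun_coeff_local:
  "L2_inner (test_fun d \<delta> L) (gabor_atom B2c a b k m)
     = (\<Sum>j\<in>near_indices k. complex_of_real (weight j) * L2_inner (windowed_box k j) (wave b m))"
proof -
  have "test_fun d \<delta> L x * cnj (gabor_atom B2c a b k m x)
      = (\<Sum>j\<in>near_indices k. complex_of_real (weight j) * windowed_box k j x) * cnj (wave b m x)" for x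
  proof -
    have "test_fun d \<delta> L x * B2c (x - a * of_int k)
        = (\<Sum>j\<in>{0..<5 * int L}. complex_of_real (weight j) * windowed_box k j x)"
      unfolding test_fun_def sum_distrib_right windowed_box_def by (simp add: mult.assoc)
    also have "\<dots> = (\<Sum>j\<in>near_indices k. complex_of_real (weight j) * windowed_box k j x)"
    proof (intro sum.mono_neutral_right ballI)
      fix j assume "j \<in> {0..<5 * int L} - near_indices k"
      then have "j \<notin> {5 * k - 16..5 * k + 16}"
        by (auto simp: near_indices_def)
      then have "windowed_box k j x = 0"
        using B2_translate_eq_0_far[of j x k] by (auto simp: windowed_box_def)
      then show "complex_of_real (weight j) * windowed_box k j x = 0"
        by simp
    qed (auto simp: near_indices_def)
    finally show ?thesis
      by (simp add: gabor_atom_eq_wave mult_ac)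
  qed
  then have "L2_inner (test_fun d \<delta> L) (gabor_atom B2c a b k m)
      = L2_inner (\<lambda>x. \<Sum>j\<in>near_indices k. complex_of_real (weight j) * windowed_box k j x) (wave b m)"
    by (simp add: L2_inner_def)
  also have "\<dots> = (\<Sum>j\<in>near_indices k. complex_of_real (weight j) * L2_inner (windowed_box k j) (wave b m))"
  proof (subst L2_inner_sum)
    show "integrable lborel (\<lambda>x. complex_of_real (weight j) * windowed_box k j x * cnj (wave b m x))" for j
      using norm_windowed_box_le grid_box_le_half_interval
      by (intro integrable_bounded_by_interval[where K = "\<bar>weight j\<bar>" and lo = "of_int j * d"])
         (auto simp: norm_mult intro!: mult_left_mono order_trans[OF norm_windowed_box_le])
  qed (simp_all add: L2_inner_scaleC)
  finally show ?thesis .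
qed

text \<open>\<open>108900 = 5\<^sup>2 * 33\<^sup>2 * 4\<close>: the weights are bounded by 5, at most 33 boxes meet a window, and the
  factor 4 comes from \<open>bessel_wave_short_support\<close>.\<close>

lemma near_combination_bound:
  assumes r: "\<And>j. r j \<in> borel_measurable lborel" "\<And>j x. cmod (r j x) \<le> grid_box d \<delta> j x"
    and Q: "\<And>j. (LINT x|lborel. (cmod (r j x))\<^sup>2) \<le> Q" and M: "finite M"
  shows "(\<Sum>m\<in>M. (cmod (\<Sum>j\<in>near_indices k. complex_of_real (weight j) * L2_inner (r j) (wave b m)))\<^sup>2)
      \<le> 108900 * B * Q"
proof -
  have "0 \<le> Q"
  proof -
    have "0 \<le> (LINT x|lborel. (cmod (r 0 x))\<^sup>2)"
      by (intro integral_nonneg_AE) auto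
    with Q[of 0] show ?thesis
      by linarith
  qed
  have a: "0 < a" "a \<le> 1/2"
    using a_eq d_ge d_le by auto
  have "(\<Sum>m\<in>M. (cmod (\<Sum>j\<in>near_indices k. complex_of_real (weight j) * L2_inner (r j) (wave b m)))\<^sup>2)
      \<le> 5\<^sup>2 * (real (card (near_indices k)))\<^sup>2 * (4 * B * Q)"
    using r(1) order_trans[OF r(2) grid_box_le_half_interval] abs_weight_le Q M
    by (intro bessel_wave_combination[OF bessel B a, where K = 1 and lo = "\<lambda>j. of_int j * d"]) auto
  also have "\<dots> \<le> 5\<^sup>2 * 33\<^sup>2 * (4 * B * Q)"
    using card_near_indices_le B \<open>0 \<le> Q\<close> by (intro mult_right_mono mult_left_mono power_mono) auto
  finally show ?thesis
    by simp
qed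

lemma test_fun_coeff_sum_le:
  assumes "finite M"
  shows "(\<Sum>m\<in>M. (cmod (L2_inner (test_fun d \<delta> L) (gabor_atom B2c a b k m)))\<^sup>2) \<le> 108900 * B * (\<delta> * d)"
proof -
  have "(cmod (windowed_box k j x))\<^sup>2 \<le> grid_box d \<delta> j x" for j x
    using norm_windowed_box_le[of k j x] grid_box_cases[of d \<delta> j x] norm_ge_zero[of "windowed_box k j x"]
    by (auto simp: power2_eq_square mult_le_one)
  then have "(LINT x|lborel. (cmod (windowed_box k j x))\<^sup>2) \<le> (LINT x|lborel. grid_box d \<delta> j x)" for j
    using order_trans[OF norm_windowed_box_le grid_box_le_half_interval]
    by (intro integral_mono integrable_grid_box integrable_sq_bounded_by_interval[where K = 1]) auto
  then show ?thesis
    unfolding test_fun_coeff_local using \<delta>_pos d_ge assms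
    by (intro near_combination_bound) (auto simp: norm_windowed_box_le integral_grid_box)
qed

definition window_error :: "int \<Rightarrow> int \<Rightarrow> real \<Rightarrow> complex" where
  "window_error k j x = complex_of_real (grid_box d \<delta> j x * (B2 (x - a * of_int k) - B2 (of_int (j - 5 * k) * d)))"

lemma window_error_measurable [measurable]: "window_error k j \<in> borel_measurable borel"
  unfolding window_error_def by measurable

lemma norm_window_error_le: "cmod (window_error k j x) \<le> \<delta> * d * grid_box d \<delta> j x"
proof (cases "grid_box d \<delta> j x = 0")
  case False
  then have box: "grid_box d \<delta> j x = 1" "of_int j * d \<le> x" "x \<le> of_int j * d + \<delta> * d"
    using grid_box_cases grid_box_nonzero_iff by blast+
  have "\<bar>B2 (x - a * of_int k) - B2 (of_int (j - 5 * k) * d)\<bar> \<le> \<bar>(x - a * of_int k) - of_int (j - 5 * k) * d\<bar>"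
    by (rule B2_lipschitz)
  also have "\<bar>(x - a * of_int k) - of_int (j - 5 * k) * d\<bar> = \<bar>x - of_int j * d\<bar>"
    using a_eq by (simp add: algebra_simps)
  also have "\<dots> \<le> \<delta> * d"
    using box by simp
  finally show ?thesis
    using box unfolding window_error_def norm_of_real by simp
qed (simp add: window_error_def)

lemma norm_window_error_le_grid_box: "cmod (window_error k j x) \<le> grid_box d \<delta> j x"
proof -
  have "\<delta> * d * grid_box d \<delta> j x \<le> 1 * grid_box d \<delta> j x"
    using box_length_le_half grid_box_nonneg by (intro mult_right_mono) auto
  then show ?thesis
    using norm_window_error_le[of k j x] by simp
qed

lemma windowed_box_eq:
  "windowed_box k j x
     = complex_of_real (B2 (of_int (j - 5 * k) * d)) * complex_of_real (grid_box d \<delta> j x) + window_error k j x"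
  by (simp add: windowed_box_def window_error_def algebra_simps)

lemma L2_inner_grid_box_wave:
  "L2_inner (\<lambda>x. complex_of_real (grid_box d \<delta> j x)) (wave b m)
     = cnj (zeta6 m j) * L2_inner (\<lambda>x. complex_of_real (grid_box d \<delta> 0 x)) (wave b m)"
  using L2_inner_translate_wave[of "\<lambda>x. complex_of_real (grid_box d \<delta> 0 x)" "of_int j * d" b m]
  by (simp add: grid_box_translate[symmetric] wave_grid[OF bd])

lemma L2_inner_windowed_box_wave:
  "L2_inner (windowed_box k j) (wave b m)
     = complex_of_real (B2 (of_int (j - 5 * k) * d)) * cnj (zeta6 m j)
         * L2_inner (\<lambda>x. complex_of_real (grid_box d \<delta> 0 x)) (wave b m)
       + L2_inner (window_error k j) (wave b m)"
proof -
  have "cmod (complex_of_real (B2 (of_int (j - 5 * k) * d)) * complex_of_real (grid_box d \<delta> j x))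
      \<le> 1 * indicator {of_int j * d .. of_int j * d + 1/2} x" for x
    using grid_box_le_half_interval[of j x] B2_le_1 B2_nonneg grid_box_nonneg[of d \<delta> j x]
    by (simp add: norm_mult) (meson mult_left_le_one_le order_trans)
  then have "integrable lborel (\<lambda>x. complex_of_real (B2 (of_int (j - 5 * k) * d))
      * complex_of_real (grid_box d \<delta> j x) * cnj (wave b m x))"
    by (intro integrable_mult_cnj_wave[where K = 1 and lo = "of_int j * d" and hi = "of_int j * d + 1/2"]) auto
  moreover have "integrable lborel (\<lambda>x. window_error k j x * cnj (wave b m x))"
    using order_trans[OF norm_window_error_le_grid_box grid_box_le_half_interval]
    by (intro integrable_mult_cnj_wave[where K = 1 and lo = "of_int j * d" and hi = "of_int j * d + 1/2"]) auto
  ultimately have "L2_inner (windowed_box k j) (wave b m)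
      = L2_inner (\<lambda>x. complex_of_real (B2 (of_int (j - 5 * k) * d)) * complex_of_real (grid_box d \<delta> j x)) (wave b m)
        + L2_inner (window_error k j) (wave b m)"
    unfolding windowed_box_eq[abs_def] by (rule L2_inner_add)
  then show ?thesis
    by (simp only: L2_inner_scaleC L2_inner_grid_box_wave[of j] mult.assoc)
qed

lemma test_fun_coeff_interior:
  assumes "16 \<le> 5 * k" "5 * k + 16 < 5 * int L"
  shows "L2_inner (test_fun d \<delta> L) (gabor_atom B2c a b k m)
     = (\<Sum>j\<in>near_indices k. complex_of_real (weight j) * L2_inner (window_error k j) (wave b m))"
proof -
  \<comment> \<open>Freezing the window at the grid points leaves a combination of translates of one box
    whose coefficients are annihilated by \<open>weighted_B2_sum_shift_eq_0\<close>.\<close>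
  define I where "I = L2_inner (\<lambda>x. complex_of_real (grid_box d \<delta> 0 x)) (wave b m)"
  define c where "c j = complex_of_real (weight j * B2 (of_int (j - 5 * k) * d))" for j
  have near: "near_indices k = {5 * k - 16..5 * k + 16}"
    using assms by (auto simp: near_indices_def)
  have "L2_inner (windowed_box k j) (wave b m)
      = complex_of_real (B2 (of_int (j - 5 * k) * d)) * cnj (zeta6 m j) * I
        + L2_inner (window_error k j) (wave b m)" for j
    unfolding I_def by (rule L2_inner_windowed_box_wave)
  then have "L2_inner (test_fun d \<delta> L) (gabor_atom B2c a b k m)
      = (\<Sum>j\<in>near_indices k. cnj (c j * zeta6 m j) * I)
        + (\<Sum>j\<in>near_indices k. complex_of_real (weight j) * L2_inner (window_error k j) (wave b m))"
    unfolding test_fun_coeff_local sum.distrib[symmetric]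
    by (intro sum.cong) (simp_all add: c_def algebra_simps)
  also have "(\<Sum>j\<in>near_indices k. cnj (c j * zeta6 m j) * I) = cnj (\<Sum>j\<in>near_indices k. c j * zeta6 m j) * I"
    by (simp only: cnj_sum sum_distrib_right)
  also have "(\<Sum>j\<in>near_indices k. c j * zeta6 m j) = 0"
    unfolding near c_def using d_ge d_le by (rule weighted_B2_sum_shift_eq_0)
  finally show ?thesis
    by simp
qed

lemma test_fun_coeff_sum_le_interior:
  assumes "finite M" "16 \<le> 5 * k" "5 * k + 16 < 5 * int L"
  shows "(\<Sum>m\<in>M. (cmod (L2_inner (test_fun d \<delta> L) (gabor_atom B2c a b k m)))\<^sup>2) \<le> 108900 * B * (\<delta> * d) ^ 3"
proof -
  have "(cmod (window_error k j x))\<^sup>2 \<le> (\<delta> * d)\<^sup>2 * grid_box d \<delta> j x" for j x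
  proof -
    have "(cmod (window_error k j x))\<^sup>2 \<le> (\<delta> * d * grid_box d \<delta> j x)\<^sup>2"
      by (intro power_mono norm_window_error_le) simp
    also have "\<dots> = (\<delta> * d)\<^sup>2 * grid_box d \<delta> j x"
      using grid_box_cases[of d \<delta> j x] by (auto simp: power2_eq_square)
    finally show ?thesis .
  qed
  then have "(LINT x|lborel. (cmod (window_error k j x))\<^sup>2) \<le> (LINT x|lborel. (\<delta> * d)\<^sup>2 * grid_box d \<delta> j x)" for j
    using order_trans[OF norm_window_error_le_grid_box grid_box_le_half_interval]
    by (intro integral_mono integrable_mult_right integrable_grid_box integrable_sq_bounded_by_interval[where K = 1]) auto
  also have "(LINT x|lborel. (\<delta> * d)\<^sup>2 * grid_box d \<delta> j x) = (\<delta> * d) ^ 3" for j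
    using \<delta>_pos d_ge by (simp add: integral_grid_box power2_eq_square power3_eq_cube)
  finally show ?thesis
    unfolding test_fun_coeff_interior[OF assms(2,3)]
    using assms(1) norm_window_error_le_grid_box by (intro near_combination_bound) auto
qed

lemma test_fun_coeff_sum_le_indicator:
  assumes "finite M"
  shows "(\<Sum>m\<in>M. (cmod (L2_inner (test_fun d \<delta> L) (gabor_atom B2c a b k m)))\<^sup>2)
    \<le> 108900 * B * (\<delta> * d) ^ 3 * indicator {-3..int L + 3} k
      + 108900 * B * (\<delta> * d) * indicator ({-3..3} \<union> {int L - 3..int L + 3}) k"
proof -
  have nonneg: "0 \<le> 108900 * B * (\<delta> * d) ^ 3" "0 \<le> 108900 * B * (\<delta> * d)"
    using B \<delta>_pos d_ge by auto
  consider "k < -3 \<or> int L + 3 < k" | "16 \<le> 5 * k" "5 * k + 16 < 5 * int L"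
    | "k \<in> {-3..3} \<union> {int L - 3..int L + 3}"
    by fastforce
  then show ?thesis
  proof cases
    case 1
    then have "near_indices k = {}"
      by (auto simp: near_indices_def)
    then show ?thesis
      using nonneg by (simp add: test_fun_coeff_local)
  next
    case 2
    then show ?thesis
      using test_fun_coeff_sum_le_interior[OF assms] nonneg by (auto simp: indicator_def)
  next
    case 3
    then have "k \<in> {-3..int L + 3}"
      by auto
    with 3 show ?thesis
      using test_fun_coeff_sum_le[OF assms, of k] nonneg by simp
  qed
qed

lemma test_fun_gabor_finite_sum_le:
  assumes "finite S"
  shows "(\<Sum>(k, m)\<in>S. (cmod (L2_inner (test_fun d \<delta> L) (gabor_atom B2c a b k m)))\<^sup>2)
    \<le> (real L + 7) * (108900 * B * (\<delta> * d) ^ 3) + 14 * (108900 * B * (\<delta> * d))"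
proof -
  define F where "F k m = (cmod (L2_inner (test_fun d \<delta> L) (gabor_atom B2c a b k m)))\<^sup>2" for k m
  define R where "R = {-3..int L + 3}"
  define E where "E = {-3..3} \<union> {int L - 3..int L + 3}"
  define K where "K = fst ` S \<union> R"
  have fin: "finite K" "finite (snd ` S)"
    using assms by (auto simp: K_def R_def)
  have "E \<subseteq> R" "R \<subseteq> K"
    by (auto simp: E_def R_def K_def)
  have "(\<Sum>(k, m)\<in>S. F k m) \<le> (\<Sum>(k, m)\<in>K \<times> snd ` S. F k m)"
    using fin by (intro sum_mono2) (auto simp: F_def K_def intro: rev_image_eqI)
  also have "\<dots> = (\<Sum>k\<in>K. \<Sum>m\<in>snd ` S. F k m)"
    by (simp add: sum.cartesian_product)
  also have "\<dots> \<le> (\<Sum>k\<in>K. 108900 * B * (\<delta> * d) ^ 3 * indicator R k + 108900 * B * (\<delta> * d) * indicator E k)"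
    unfolding F_def R_def E_def using fin by (intro sum_mono test_fun_coeff_sum_le_indicator) auto
  also have "\<dots> = 108900 * B * (\<delta> * d) ^ 3 * card R + 108900 * B * (\<delta> * d) * card E"
  proof -
    have "(\<Sum>k\<in>K. indicator X k :: real) = card X" if "X \<subseteq> K" for X
      using fin that by (simp add: indicator_def Int_absorb1 Int_def[symmetric])
    then show ?thesis
      using \<open>E \<subseteq> R\<close> \<open>R \<subseteq> K\<close> by (simp add: sum.distrib sum_distrib_left[symmetric])
  qed
  also have "\<dots> \<le> (real L + 7) * (108900 * B * (\<delta> * d) ^ 3) + 14 * (108900 * B * (\<delta> * d))"
  proof -
    have "card E \<le> card {-3..3::int} + card {int L - 3..int L + 3}"
      unfolding E_def by (rule card_Un_le)
    then have "real (card E) \<le> 14"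
      by simp
    moreover have "card R = L + 7"
      by (simp add: R_def)
    ultimately show ?thesis
      using B \<delta>_pos d_ge by (simp add: mult_left_mono mult.commute)
  qed
  finally show ?thesis
    by (simp add: F_def)
qed

lemma test_fun_gabor_infsum_le:
  "(\<Sum>\<^sub>\<infinity>(k, m). (cmod (L2_inner (test_fun d \<delta> L) (gabor_atom B2c a b k m)))\<^sup>2)
    \<le> (real L + 7) * (108900 * B * (\<delta> * d) ^ 3) + 14 * (108900 * B * (\<delta> * d))"
  using d_ge \<delta>_pos \<delta>_le
  by (intro gabor_infsum_le_finite_sums[OF bessel] test_fun_L2 test_fun_gabor_finite_sum_le) auto

end

section \<open>Violating the lower frame bound\<close>

lemma no_uniform_cubic_bound:
  fixes A C \<epsilon> :: real
  assumes A: "0 < A" and C: "0 \<le> C" and \<epsilon>: "0 < \<epsilon>"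
    and bound: "\<And>t L. 0 < t \<Longrightarrow> t \<le> \<epsilon> \<Longrightarrow> A * real L * t \<le> (real L + 7) * (C * t ^ 3) + 14 * (C * t)"
  shows False
proof -
  define t where "t = min \<epsilon> (min 1 (A / (2 * (C + 1))))"
  have t: "0 < t" "t \<le> \<epsilon>" "t \<le> 1" "t \<le> A / (2 * (C + 1))"
    using A C \<epsilon> by (auto simp: t_def)
  have "C * t\<^sup>2 \<le> C * (A / (2 * (C + 1)))"
    using t C by (intro mult_left_mono) (auto simp: power2_eq_square mult_le_one intro: order_trans[OF mult_right_le_one_le])
  also have "\<dots> \<le> A / 2"
    using A C by (simp add: field_simps)
  finally have small: "C * t\<^sup>2 \<le> A / 2" .
  obtain L :: nat where L: "7 + 28 * C / A < real L"
    using reals_Archimedean2 by blast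
  have "(A * real L) * t \<le> ((real L + 7) * (C * t\<^sup>2) + 14 * C) * t"
    using bound[OF t(1,2), of L] by (simp add: algebra_simps power2_eq_square power3_eq_cube)
  then have "A * real L \<le> (real L + 7) * (C * t\<^sup>2) + 14 * C"
    using t(1) by simp
  also have "\<dots> \<le> (real L + 7) * (A / 2) + 14 * C"
    using small by (intro add_right_mono mult_left_mono) auto
  finally have "real L \<le> 7 + 28 * C / A"
    using A by (simp add: field_simps)
  with L show False
    by simp
qed

lemma grid_spacing_bounds:
  fixes a b :: real
  assumes "0 < b" "a * b = 5 / 6" "b \<in> {7/3 .. 8/3}"
  shows "b * (a / 5) = 1/6" "1/16 \<le> a / 5" "a / 5 \<le> 1/14"
proof -
  show "b * (a / 5) = 1/6"
    using assms(2) by (simp add: field_simps)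
  then have d_eq: "a / 5 = 1 / (6 * b)"
    using assms(1) by (simp add: field_simps)
  show "1/16 \<le> a / 5" "a / 5 \<le> 1/14"
    unfolding d_eq using assms(1,3) by (simp_all add: divide_simps)
qed

theorem theorem3p7:
  fixes a b :: real
  assumes "a > 0" and "b > 0" and "a * b = 5 / 6"
    and "b \<in> {7/3 .. 8/3}"
  shows "\<not> gabor_frame (\<lambda>x. complex_of_real (B2 x)) a b"
proof
  assume "gabor_frame (\<lambda>x. complex_of_real (B2 x)) a b"
  then obtain A B where A: "0 < A" and B: "0 \<le> B" and bessel: "gabor_bessel B2c a b B"
    and lower: "\<And>f. f \<in> L2 \<Longrightarrow> A * L2_norm_sq f \<le> (\<Sum>\<^sub>\<infinity>(k, m). (cmod (L2_inner f (gabor_atom B2c a b k m)))\<^sup>2)"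
    by (elim gabor_frame_bounds) blast
  define d where "d = a / 5"
  have d: "a = 5 * d" "b * d = 1/6" "1/16 \<le> d" "d \<le> 1/14"
    using grid_spacing_bounds[OF assms(2-4)] by (simp_all add: d_def)
  show False
  proof (rule no_uniform_cubic_bound[of "68 * A" "108900 * B" "d / 2"])
    fix t L
    assume "0 < t" "t \<le> d / 2"
    then have \<delta>: "0 < t / d" "t / d \<le> 1/2" and t: "t / d * d = t"
      using d by (auto simp: field_simps)
    have f: "test_fun d (t / d) L \<in> L2" "L2_norm_sq (test_fun d (t / d) L) = 68 * real L * t"
      using test_fun_L2[of d "t / d" L] \<delta> d t by auto
    have "68 * A * real L * t = A * L2_norm_sq (test_fun d (t / d) L)"
      by (simp add: f(2))
    also have "\<dots> \<le> (\<Sum>\<^sub>\<infinity>(k, m). (cmod (L2_inner (test_fun d (t / d) L) (gabor_atom B2c a b k m)))\<^sup>2)"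
      by (rule lower[OF f(1)])
    also have "\<dots> \<le> (real L + 7) * (108900 * B * t ^ 3) + 14 * (108900 * B * t)"
      using test_fun_gabor_infsum_le[OF d \<delta> B bessel] by (simp only: t)
    finally show "68 * A * real L * t \<le> (real L + 7) * (108900 * B * t ^ 3) + 14 * (108900 * B * t)" .
  qed (use A B d in auto)
qed

end
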